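(* Let $n\in\mathbb{N}$ and let $\varphi$ be a formula of $\mathbf{CPN}_n$ (built only from propositional letters, the constants $\perp_c$, $\perp_{(n)}$, $\top_{(n)}$, the negations $\neg_c$ and $\to_{(n)}$). Regard $\varphi$ as a formula of $\mathbf{CPN}_{n+1}$ by reading every chain over $[n]$ as a chain over $[n+1]$ (so $\perp_{(n)}$ becomes $\perp_{\{1,\dots,n\}}$ and $\neg_{(n)}$ becomes the weak negation $\neg_{\{1,\dots,n\}}$ of $\mathbf{CPN}_{n+1}$), replacing $\to_{(n)}$ by $\to_{(n+1)}$ and $\top_{(n)}$ by $\top_{(n+1)}$. If $\vdash_{(n+1)}\varphi$, then $\vdash_{(n)}\varphi$.
   Context: For each $m\ge 1$, write $[m]=\{1,\dots,m\}$. Chains: a chain over $[m]$ is a finite sequence of distinct elements of $[m]$; chains with the same length and the same symbols are identified, so a chain is effectively a subset of $[m]$; $\epsilon$ is the empty chain and $(m)$ the chain of all symbols of $[m]$. For chains $c,d$: the coconcatenation $c\otimes d$ is the chain of symbols occurring in exactly one of $c,d$; $d$ is a subchain of $c$ if every symbol of $d$ is a symbol of $c$. Language of $\mathbf{CPN}_m$: a countable set of propositional letters (the same for all $m$); constants $\perp_c$ for each chain $c$ over $[m]$ with $1\le|c|\le m-1$, and constants $\perp_{(m)}$ and $\top_{(m)}$; a unary connective $\neg_c$ for each nonempty chain $c$ over $[m]$; a binary connective $\to_{(m)}$. Formulas are built as usual. Conventions: $\neg_\epsilon\varphi:=\varphi$, $\perp_\epsilon:=\top_{(m)}$, and $\perp_c$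 for $c=(m)$ means $\perp_{(m)}$. Abbreviations: $\varphi\wedge_{(m)}\psi:=\neg_{(m)}(\varphi\to_{(m)}\neg_{(m)}\psi)$, $\varphi\leftrightarrow_{(m)}\psi:=(\varphi\to_{(m)}\psi)\wedge_{(m)}(\psi\to_{(m)}\varphi)$. Axioms of $\mathbf{CPN}_m$, for all formulas $\varphi,\psi,\chi$ and all nonempty chains $c_k,c_r$ over $[m]$: (A1) $\varphi\to_{(m)}(\psi\to_{(m)}\varphi)$; (A2) $(\varphi\to_{(m)}(\psi\to_{(m)}\chi))\to_{(m)}((\varphi\to_{(m)}\psi)\to_{(m)}(\varphi\to_{(m)}\chi))$; (A3) $(\neg_{(m)}\psi\to_{(m)}\neg_{(m)}\varphi)\to_{(m)}((\neg_{(m)}\psi\to_{(m)}\varphi)\to_{(m)}\psi)$; (A4) $\varphi\to_{(m)}(\perp_{c_k}\to_{(m)}\neg_{c_k}\varphi)$; (A5) $\neg_{c_k}\neg_{c_r}\varphi\leftrightarrow_{(m)}\neg_{c_k\otimes c_r}\varphi$; (A6) $\neg_{c_k}\perp_{c_r}\leftrightarrow_{(m)}\perp_{c_k\otimes c_r}$; (A7) $\perp_{c_k}\to_{(m)}\perp_{c_r}$, whenever $c_r$ is a subchain of $c_k$. The only rule is modus ponens for $\to_{(m)}$; $\vdash_{(m)}\varphi$ means $\varphi$ has a derivation from these axioms by modus ponens. *)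

theory Defs
  imports Main
begin

text \<open>Chains over [m] are identified with subsets of {1..m}.  Formulas are
represented level-independently: the chain index of a constant or negation is a
set of naturals, and Top / Imp stand for the top constant and implication of
whatever CPN_m the formula is considered in.\<close>

datatype form =
    PVar nat
  | Bot "nat set"
  | Top
  | Neg "nat set" form
  | Imp form form

type_synonym chain = "nat set"

definition chain_over :: "nat \<Rightarrow> chain \<Rightarrow> bool" where
  "chain_over m c \<longleftrightarrow> c \<subseteq> {1..m}"

definition full_chain :: "nat \<Rightarrow> chain" where
  "full_chain m = {1..m}"

definition coconc :: "chain \<Rightarrow> chain \<Rightarrow> chain" where
  "coconc c d = (c - d) \<union> (d - c)"

fun wf :: "nat \<Rightarrow> form \<Rightarrow> bool" where
  "wf m (PVar p) = True"
| "wf m (Bot c) = (chain_over m c \<and> c \<noteq> {})"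
| "wf m Top = True"
| "wf m (Neg c f) = (chain_over m c \<and> c \<noteq> {} \<and> wf m f)"
| "wf m (Imp f g) = (wf m f \<and> wf m g)"

definition negc :: "chain \<Rightarrow> form \<Rightarrow> form" where
  "negc c f = (if c = {} then f else Neg c f)"

definition botc :: "chain \<Rightarrow> form" where
  "botc c = (if c = {} then Top else Bot c)"

definition conj :: "nat \<Rightarrow> form \<Rightarrow> form \<Rightarrow> form" where
  "conj m f g = Neg (full_chain m) (Imp f (Neg (full_chain m) g))"

definition iff :: "nat \<Rightarrow> form \<Rightarrow> form \<Rightarrow> form" where
  "iff m f g = conj m (Imp f g) (Imp g f)"

inductive prov :: "nat \<Rightarrow> form \<Rightarrow> bool" for m :: nat where
  A1: "\<lbrakk>wf m f; wf m g\<rbrakk> \<Longrightarrow> prov m (Imp f (Imp g f))"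
| A2: "\<lbrakk>wf m f; wf m g; wf m h\<rbrakk> \<Longrightarrow>
        prov m (Imp (Imp f (Imp g h)) (Imp (Imp f g) (Imp f h)))"
| A3: "\<lbrakk>wf m f; wf m g\<rbrakk> \<Longrightarrow>
        prov m (Imp (Imp (Neg (full_chain m) g) (Neg (full_chain m) f))
                    (Imp (Imp (Neg (full_chain m) g) f) g))"
| A4: "\<lbrakk>wf m f; chain_over m ck; ck \<noteq> {}\<rbrakk> \<Longrightarrow>
        prov m (Imp f (Imp (Bot ck) (Neg ck f)))"
| A5: "\<lbrakk>wf m f; chain_over m ck; ck \<noteq> {}; chain_over m cr; cr \<noteq> {}\<rbrakk> \<Longrightarrow>
        prov m (iff m (Neg ck (Neg cr f)) (negc (coconc ck cr) f))"
| A6: "\<lbrakk>chain_over m ck; ck \<noteq> {}; chain_over m cr; cr \<noteq> {}\<rbrakk> \<Longrightarrow>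
        prov m (iff m (Neg ck (Bot cr)) (botc (coconc ck cr)))"
| A7: "\<lbrakk>chain_over m ck; ck \<noteq> {}; chain_over m cr; cr \<noteq> {}; cr \<subseteq> ck\<rbrakk> \<Longrightarrow>
        prov m (Imp (Bot ck) (Bot cr))"
| MP: "\<lbrakk>prov m (Imp f g); prov m f\<rbrakk> \<Longrightarrow> prov m g"

text \<open>Embedding of CPN_n formulas into CPN_(n+1): chains over [n] are read as
chains over [n+1]; Top and Imp of level n become those of level n+1.  In this
level-independent representation this is the identity on syntax.\<close>
definition embed :: "form \<Rightarrow> form" where
  "embed f = f"

end

theory Submission
  imports Defs
begin

text \<open>Deleting the symbol \<open>n+1\<close> from every chain index translates \<open>CPN\<^sub>n\<^sub>+\<^sub>1\<close> into
\<open>CPN\<^sub>n\<close>: a negation whose chain becomes empty disappears, and a constant \<open>\<bottom>\<^sub>c\<close> whose chain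
becomes empty (i.e. \<open>c = {n+1}\<close>) is sent to \<open>\<not>\<^sub>(\<^sub>n\<^sub>)\<bottom>\<^sub>(\<^sub>n\<^sub>)\<close>, a theorem of \<open>CPN\<^sub>n\<close>.  Every
axiom instance of \<open>CPN\<^sub>n\<^sub>+\<^sub>1\<close> is translated into a theorem of \<open>CPN\<^sub>n\<close> (only A6 needs a
real argument, by a case distinction on the restricted chains), the translation commutes
with implication, and it fixes every formula of \<open>CPN\<^sub>n\<close>.\<close>

lemma coconc_self [simp]: "coconc c c = {}"
  by (auto simp: coconc_def)

lemma coconc_empty [simp]: "coconc {} c = c" "coconc c {} = c"
  by (auto simp: coconc_def)

lemma coconc_eq_empty_iff: "coconc a b = {} \<longleftrightarrow> a = b"
  by (auto simp: coconc_def)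

lemma coconc_cancel_right: "coconc (coconc a b) b = a"
  by (auto simp: coconc_def)

lemma coconc_Diff: "coconc a b - {x} = coconc (a - {x}) (b - {x})"
  by (auto simp: coconc_def)

lemma chain_over_coconc: "chain_over m a \<Longrightarrow> chain_over m b \<Longrightarrow> chain_over m (coconc a b)"
  by (auto simp: chain_over_def coconc_def)

lemma chain_over_full_chain [simp]: "chain_over m (full_chain m)"
  by (auto simp: chain_over_def full_chain_def)

lemma full_chain_eq_empty_iff [simp]: "full_chain m = {} \<longleftrightarrow> m = 0"
  by (auto simp: full_chain_def)

lemma full_chain_Suc_Diff [simp]: "full_chain (Suc n) - {Suc n} = full_chain n"
  by (auto simp: full_chain_def)

lemma chain_over_Suc_Diff: "chain_over (Suc n) c \<Longrightarrow> chain_over n (c - {Suc n})"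
  by (auto simp: chain_over_def)

lemma wf_negc: "chain_over m c \<Longrightarrow> wf m f \<Longrightarrow> wf m (negc c f)"
  by (auto simp: negc_def)

lemma wf_botc: "chain_over m c \<Longrightarrow> wf m (botc c)"
  by (auto simp: botc_def)

lemma wf_conj [simp]: "0 < m \<Longrightarrow> wf m (conj m f g) \<longleftrightarrow> wf m f \<and> wf m g"
  by (auto simp: conj_def)

lemma wf_iff [simp]: "0 < m \<Longrightarrow> wf m (iff m f g) \<longleftrightarrow> wf m f \<and> wf m g"
  by (auto simp: iff_def)

lemma prov_wf: "prov m f \<Longrightarrow> 0 < m \<Longrightarrow> wf m f"
  by (induction rule: prov.induct) (auto intro!: wf_negc wf_botc chain_over_coconc)

abbreviation sneg :: "nat \<Rightarrow> form \<Rightarrow> form" where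
  "sneg m f \<equiv> Neg (full_chain m) f"

lemma prov_imp_refl: "wf m f \<Longrightarrow> prov m (Imp f f)"
  using MP[OF MP[OF A2[of m f "Imp f f" f] A1] A1] by simp

inductive prov_from :: "nat \<Rightarrow> form set \<Rightarrow> form \<Rightarrow> bool" for m :: nat where
  hyp: "f \<in> G \<Longrightarrow> prov_from m G f"
| provable: "prov m f \<Longrightarrow> prov_from m G f"
| mp: "prov_from m G (Imp f g) \<Longrightarrow> prov_from m G f \<Longrightarrow> prov_from m G g"

lemma prov_from_wf: "prov_from m G f \<Longrightarrow> 0 < m \<Longrightarrow> \<forall>g\<in>G. wf m g \<Longrightarrow> wf m f"
  by (induction rule: prov_from.induct) (auto dest: prov_wf)

lemma prov_from_empty: "prov_from m {} f \<Longrightarrow> prov m f"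
  by (induction "{} :: form set" f rule: prov_from.induct) (auto intro: MP)

lemma prov_from_imp_const: "prov_from m G f \<Longrightarrow> wf m f \<Longrightarrow> wf m g \<Longrightarrow> prov_from m G (Imp g f)"
  using prov_from.mp[OF prov_from.provable[OF A1[of m f g]]] by blast

theorem deduction:
  assumes m: "0 < m" and "prov_from m (insert f G) g" and f: "wf m f" and G: "\<forall>h\<in>G. wf m h"
  shows "prov_from m G (Imp f g)"
  using assms(2)
proof (induction "insert f G" g rule: prov_from.induct)
  case (hyp g)
  show ?case
  proof (cases "g = f")
    case True
    then show ?thesis using prov_from.provable[OF prov_imp_refl[OF f]] by simp
  next
    case False
    with hyp G have "g \<in> G" "wf m g" by auto
    then show ?thesis using prov_from.mp[OF prov_from.provable[OF A1] prov_from.hyp] f by blast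
  qed
next
  case (provable g)
  then have "wf m g" using prov_wf m by blast
  then show ?case using prov_from.mp[OF prov_from.provable[OF A1] prov_from.provable] provable f
    by blast
next
  case (mp g h)
  have "wf m (Imp g h)" using prov_from_wf[OF mp(1) m] f G by auto
  then show ?case
    using prov_from.mp[OF prov_from.mp[OF prov_from.provable[OF A2[of m f g h]] mp(2)] mp(4)] f
    by simp
qed

corollary prov_imp_of_prov_from:
  "0 < m \<Longrightarrow> prov_from m {f} g \<Longrightarrow> wf m f \<Longrightarrow> prov m (Imp f g)"
  using deduction[of m f "{}" g] prov_from_empty by auto

context
  fixes m :: nat
  assumes m [simp]: "0 < m"
begin

lemma prov_imp_trans: "wf m f \<Longrightarrow> prov m (Imp f g) \<Longrightarrow> prov m (Imp g h) \<Longrightarrow> prov m (Imp f h)"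
proof -
  assume f: "wf m f" and fg: "prov m (Imp f g)" and gh: "prov m (Imp g h)"
  have "prov_from m {f} h"
    using prov_from.mp[OF prov_from.provable[OF gh]
        prov_from.mp[OF prov_from.provable[OF fg] prov_from.hyp]] by simp
  then show ?thesis using prov_imp_of_prov_from[OF m] f by blast
qed

lemma prov_sneg_sneg_imp: "wf m f \<Longrightarrow> prov m (Imp (sneg m (sneg m f)) f)"
proof -
  assume f: "wf m f"
  let ?G = "{sneg m (sneg m f)}"
  have "prov_from m ?G (Imp (sneg m f) (sneg m (sneg m f)))"
    using prov_from_imp_const[OF prov_from.hyp] f by simp
  moreover have "prov_from m ?G (Imp (sneg m f) (sneg m f))"
    using f by (simp add: prov_from.provable prov_imp_refl)
  moreover have "prov_from m ?G (Imp (Imp (sneg m f) (sneg m (sneg m f)))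
                                   (Imp (Imp (sneg m f) (sneg m f)) f))"
    using f by (simp add: prov_from.provable A3)
  ultimately have "prov_from m ?G f" using prov_from.mp by metis
  then show ?thesis using prov_imp_of_prov_from[OF m] f by simp
qed

lemma prov_sneg_imp_imp: "wf m f \<Longrightarrow> wf m g \<Longrightarrow> prov m (Imp (sneg m f) (Imp f g))"
proof -
  assume f: "wf m f" and g: "wf m g"
  let ?G = "{f, sneg m f}"
  have "prov_from m ?G (Imp (sneg m g) (sneg m f))"
    using prov_from_imp_const[OF prov_from.hyp] f g by simp
  moreover have "prov_from m ?G (Imp (sneg m g) f)"
    using prov_from_imp_const[OF prov_from.hyp] f g by simp
  moreover have "prov_from m ?G (Imp (Imp (sneg m g) (sneg m f)) (Imp (Imp (sneg m g) f) g))"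
    using f g by (simp add: prov_from.provable A3)
  ultimately have "prov_from m ?G g" using prov_from.mp by metis
  then have "prov_from m {sneg m f} (Imp f g)" using deduction[OF m] f by simp
  then show ?thesis using prov_imp_of_prov_from[OF m] f by simp
qed

lemma prov_conjD:
  assumes f: "wf m f" and g: "wf m g" and fg: "prov m (conj m f g)"
  shows "prov m f" "prov m g"
proof -
  define d where "d = Imp f (sneg m g)"
  have d: "wf m d" using f g by (simp add: d_def)
  have hyp: "prov m (Imp (sneg m h) (sneg m d))" if "wf m h" for h
    using MP[OF A1[of m "sneg m d" "sneg m h"] fg[unfolded conj_def d_def[symmetric]]] d that
    by simp
  show "prov m f"
    using MP[OF MP[OF A3[OF d f] hyp[OF f]]] prov_sneg_imp_imp[OF f] g by (simp add: d_def)
  show "prov m g"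
    using MP[OF MP[OF A3[OF d g] hyp[OF g]] A1[of m "sneg m g" f, folded d_def]] f g by simp
qed

lemma prov_conjI:
  assumes f: "wf m f" and g: "wf m g" and "prov m f" "prov m g"
  shows "prov m (conj m f g)"
proof -
  define d where "d = Imp f (sneg m g)"
  have d: "wf m d" using f g by (simp add: d_def)
  have "prov_from m {sneg m (sneg m d)} d"
    by (meson prov_from.intros prov_sneg_sneg_imp[OF d] singletonI)
  then have "prov_from m {sneg m (sneg m d)} (sneg m g)"
    unfolding d_def using prov_from.mp prov_from.provable \<open>prov m f\<close> by blast
  then have "prov m (Imp (sneg m (sneg m d)) (sneg m g))"
    using prov_imp_of_prov_from[OF m] d by simp
  moreover have "prov m (Imp (sneg m (sneg m d)) g)"
    using MP[OF A1[of m g "sneg m (sneg m d)"] \<open>prov m g\<close>] d g by simp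
  moreover have "prov m (Imp (Imp (sneg m (sneg m d)) (sneg m g))
                             (Imp (Imp (sneg m (sneg m d)) g) (sneg m d)))"
    by (rule A3) (use d g in simp_all)
  ultimately have "prov m (sneg m d)" by (blast intro: MP)
  then show ?thesis by (simp add: conj_def d_def)
qed

lemma prov_iffI:
  assumes "prov m (Imp f g)" "prov m (Imp g f)"
  shows "prov m (iff m f g)"
  using prov_conjI[OF prov_wf[OF assms(1) m] prov_wf[OF assms(2) m] assms] by (simp add: iff_def)

lemma prov_iffD:
  assumes "prov m (iff m f g)"
  shows "prov m (Imp f g)" "prov m (Imp g f)"
proof -
  have "wf m (Imp f g)" "wf m (Imp g f)" using prov_wf[OF assms m] by auto
  then show "prov m (Imp f g)" "prov m (Imp g f)"
    using prov_conjD assms unfolding iff_def by blast+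
qed

lemma prov_iff_refl: "wf m f \<Longrightarrow> prov m (iff m f f)"
  using prov_iffI prov_imp_refl by blast

lemma prov_iff_trans:
  assumes fg: "prov m (iff m f g)" and gh: "prov m (iff m g h)"
  shows "prov m (iff m f h)"
proof -
  have "wf m f" "wf m h" using prov_wf[OF fg m] prov_wf[OF gh m] by auto
  then show ?thesis
    using prov_iffI[OF prov_imp_trans[OF _ prov_iffD(1)[OF fg] prov_iffD(1)[OF gh]]
                       prov_imp_trans[OF _ prov_iffD(2)[OF gh] prov_iffD(2)[OF fg]]]
    by blast
qed

lemma prov_iff_of_prov:
  assumes "prov m f" "prov m g"
  shows "prov m (iff m f g)"
proof -
  have "wf m f" "wf m g" using prov_wf[OF assms(1) m] prov_wf[OF assms(2) m] .
  then show ?thesis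
    using prov_iffI[OF MP[OF A1[of m g f] assms(2)] MP[OF A1[of m f g] assms(1)]] by blast
qed

lemma prov_sneg_Bot_full: "prov m (sneg m (Bot (full_chain m)))"
proof -
  let ?B = "Bot (full_chain m)"
  have B: "wf m ?B" using m by simp
  have "prov_from m {sneg m (sneg m ?B)} ?B"
    by (meson prov_from.intros prov_sneg_sneg_imp[OF B] singletonI)
  moreover have "prov m (Imp ?B (Imp ?B (sneg m ?B)))"
    using B m by (simp add: A4)
  ultimately have "prov_from m {sneg m (sneg m ?B)} (sneg m ?B)"
    by (meson prov_from.mp prov_from.provable)
  then have "prov m (Imp (sneg m (sneg m ?B)) (sneg m ?B))"
    using prov_imp_of_prov_from[OF m] B by simp
  then show ?thesis
    using MP[OF MP[OF A3[of m ?B "sneg m ?B"]] prov_sneg_sneg_imp[OF B]] B by simp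
qed

lemma prov_Top: "prov m Top"
proof -
  have "prov m (iff m (sneg m (Bot (full_chain m))) Top)"
    using A6[of m "full_chain m" "full_chain m"] by (simp add: botc_def)
  then show ?thesis using MP[OF prov_iffD(1) prov_sneg_Bot_full] by blast
qed

lemma prov_Neg_Bot_self:
  assumes "chain_over m c" "c \<noteq> {}"
  shows "prov m (Neg c (Bot c))"
proof -
  have "prov m (iff m (Neg c (Bot c)) Top)"
    using A6[of m c c] assms by (simp add: botc_def)
  then show ?thesis using MP[OF prov_iffD(2) prov_Top] by blast
qed

lemma prov_iff_negc_negc:
  assumes "chain_over m a" "chain_over m b" "wf m f"
  shows "prov m (iff m (negc a (negc b f)) (negc (coconc a b) f))"
  using assms A5[of m f a b] prov_iff_refl wf_negc
  by (cases "a = {}"; cases "b = {}") (auto simp: negc_def)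

end

definition bot_restricted :: "nat \<Rightarrow> chain \<Rightarrow> form" where
  "bot_restricted n c = (if c = {} then sneg n (Bot (full_chain n)) else Bot c)"

fun restrict :: "nat \<Rightarrow> form \<Rightarrow> form" where
  "restrict n (PVar p) = PVar p"
| "restrict n (Bot c) = bot_restricted n (c - {Suc n})"
| "restrict n Top = Top"
| "restrict n (Neg c f) = negc (c - {Suc n}) (restrict n f)"
| "restrict n (Imp f g) = Imp (restrict n f) (restrict n g)"

lemma restrict_id: "wf n f \<Longrightarrow> restrict n f = f"
proof (induction f)
  case (Bot c)
  then have "c - {Suc n} = c" by (auto simp: chain_over_def)
  with Bot show ?case by (simp add: bot_restricted_def)
next
  case (Neg c f)
  then have "c - {Suc n} = c" by (auto simp: chain_over_def)
  with Neg show ?case by (simp add: negc_def)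
qed auto

lemma negc_full_chain: "0 < m \<Longrightarrow> negc (full_chain m) f = sneg m f"
  by (simp add: negc_def)

lemma restrict_negc: "restrict n (negc c f) = negc (c - {Suc n}) (restrict n f)"
  by (simp add: negc_def)

lemma restrict_iff: "0 < n \<Longrightarrow> restrict n (iff (Suc n) f g) = iff n (restrict n f) (restrict n g)"
  by (simp add: iff_def conj_def negc_full_chain)

context
  fixes n :: nat
  assumes n [simp]: "0 < n"
begin

lemma wf_bot_restricted: "chain_over n c \<Longrightarrow> wf n (bot_restricted n c)"
  by (simp add: bot_restricted_def)

lemma wf_restrict: "wf (Suc n) f \<Longrightarrow> wf n (restrict n f)"
  by (induction f) (auto simp: chain_over_Suc_Diff intro!: wf_negc wf_bot_restricted)

lemma prov_negc_bot_restricted_self: "chain_over n a \<Longrightarrow> prov n (negc a (bot_restricted n a))"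
  using prov_sneg_Bot_full[OF n] prov_Neg_Bot_self[OF n]
  by (simp add: negc_def bot_restricted_def)

lemma prov_restrict_botc: "c - {Suc n} = {} \<Longrightarrow> prov n (restrict n (botc c))"
  using prov_Top[OF n] prov_sneg_Bot_full[OF n] by (simp add: botc_def bot_restricted_def)

lemma prov_iff_Neg_sneg_Bot_full:
  assumes a: "chain_over n a" "a \<noteq> {}"
  shows "prov n (iff n (Neg a (sneg n (Bot (full_chain n)))) (Bot a))"
proof -
  let ?f = "full_chain n"
  have A5_inst: "prov n (iff n (Neg a (sneg n (Bot ?f))) (negc (coconc a ?f) (Bot ?f)))"
    using a by (simp add: A5)
  show ?thesis
  proof (cases "a = ?f")
    case True
    with A5_inst show ?thesis by (simp add: negc_def)
  next
    case False
    then have "coconc a ?f \<noteq> {}" by (simp add: coconc_eq_empty_iff)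
    then have "prov n (iff n (Neg (coconc a ?f) (Bot ?f)) (Bot a))"
      using A6[of n "coconc a ?f" ?f] a chain_over_coconc
      by (simp add: botc_def coconc_cancel_right)
    with A5_inst \<open>coconc a ?f \<noteq> {}\<close> show ?thesis
      using prov_iff_trans[OF n] by (simp add: negc_def)
  qed
qed

lemma prov_iff_negc_bot_restricted:
  assumes a: "chain_over n a" and b: "chain_over n b" and "a \<noteq> b"
  shows "prov n (iff n (negc a (bot_restricted n b)) (Bot (coconc a b)))"
proof (cases "a = {}")
  case True
  with \<open>a \<noteq> b\<close> show ?thesis
    using prov_iff_refl[OF n] b by (simp add: negc_def bot_restricted_def)
next
  case False
  show ?thesis
  proof (cases "b = {}")
    case True
    with False show ?thesis
      using prov_iff_Neg_sneg_Bot_full a by (simp add: negc_def bot_restricted_def)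
  next
    case False
    with \<open>a \<noteq> {}\<close> \<open>a \<noteq> b\<close> show ?thesis
      using A6[of n a b] a b
      by (simp add: negc_def bot_restricted_def botc_def coconc_eq_empty_iff)
  qed
qed

lemma prov_restrict_iff_Neg_Bot:
  assumes "chain_over (Suc n) ck" "chain_over (Suc n) cr"
  shows "prov n (restrict n (iff (Suc n) (Neg ck (Bot cr)) (botc (coconc ck cr))))"
proof -
  define a b where "a = ck - {Suc n}" and "b = cr - {Suc n}"
  have ab: "chain_over n a" "chain_over n b"
    using assms chain_over_Suc_Diff by (auto simp: a_def b_def)
  have "prov n (iff n (negc a (bot_restricted n b)) (restrict n (botc (coconc ck cr))))"
  proof (cases "a = b")
    case True
    then have "coconc ck cr - {Suc n} = {}" by (simp add: a_def b_def coconc_Diff)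
    with True show ?thesis
      using prov_iff_of_prov[OF n prov_negc_bot_restricted_self[OF ab(1)] prov_restrict_botc]
      by simp
  next
    case False
    then have "restrict n (botc (coconc ck cr)) = Bot (coconc a b)"
      by (auto simp: a_def b_def botc_def bot_restricted_def coconc_Diff coconc_eq_empty_iff)
    with False show ?thesis using prov_iff_negc_bot_restricted ab by simp
  qed
  then show ?thesis by (simp add: restrict_iff[OF n] a_def b_def)
qed

theorem prov_restrict: "prov (Suc n) f \<Longrightarrow> prov n (restrict n f)"
proof (induction rule: prov.induct)
  case (A1 f g)
  then show ?case by (auto intro!: prov.A1 wf_restrict)
next
  case (A2 f g h)
  then show ?case by (auto intro!: prov.A2 wf_restrict)
next
  case (A3 f g)
  then show ?case by (auto simp: negc_full_chain intro!: prov.A3 wf_restrict)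
next
  case (A4 f ck)
  then show ?case
    by (cases "ck - {Suc n} = {}")
       (auto simp: negc_def bot_restricted_def chain_over_Suc_Diff intro!: prov.A1 prov.A4 wf_restrict)
next
  case (A5 f ck cr)
  then show ?case
    by (auto simp: restrict_iff[OF n] restrict_negc coconc_Diff chain_over_Suc_Diff
        intro!: prov_iff_negc_negc[OF n] wf_restrict)
next
  case (A6 ck cr)
  then show ?case using prov_restrict_iff_Neg_Bot by blast
next
  case (A7 ck cr)
  show ?case
  proof (cases "cr - {Suc n} = {}")
    case True
    have "wf n (restrict n (Bot ck))" using A7 by (intro wf_restrict) simp
    with True show ?thesis
      using MP[OF prov.A1 prov_sneg_Bot_full[OF n]] by (simp add: bot_restricted_def)
  next
    case False
    with A7 show ?thesis
      by (auto simp: bot_restricted_def chain_over_Suc_Diff intro!: prov.A7)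
  qed
next
  case (MP f g)
  then show ?case by (auto intro: prov.MP)
qed

end

theorem mainTheorem16:
  fixes n :: nat and \<phi> :: form
  assumes "n \<ge> 1" and "wf n \<phi>" and "prov (n + 1) (embed \<phi>)"
  shows "prov n \<phi>"
  using prov_restrict[of n \<phi>] restrict_id[of n \<phi>] assms by (simp add: embed_def)

end
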